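(* Run the mechanism BFM-SWM described in the context with arbitrary $B>0$, $\alpha>1$, $\beta>1$, $\epsilon>0$, $\ell\in\{1,2\}$, with all sellers behaving truthfully. Then for every $i\in[\ell]$, $t\in[M]$, and every $A\in\{S_{i,t}\}\cup\{u^*\}$, $$v(A)\ \le\ \frac{v(A)-p(A)}{1-1/\beta}\ \le\ \frac{v(A)-c(A)}{1-1/\beta}.$$
   Context: Setting. $\mathcal{N}$ is a finite set of $n$ sellers. The valuation $v:2^{\mathcal{N}}\to\mathbb{R}_{\ge 0}$ satisfies $v(\emptyset)=0$ and is submodular (for $X\subseteq Y\subseteq\mathcal{N}$ and $u\notin Y$, $v(u\mid Y)\le v(u\mid X)$), not necessarily monotone, where $v(S\mid T)=v(S\cup T)-v(T)$, $v(u\mid T)=v(\{u\}\mid T)$. Each seller $u$ has a private cost $c(u)\ge 0$; $c(X)=\sum_{u\in X}c(u)$. $B>0$ is the budget, $[\ell]=\{1,\dots,\ell\}$. Sellers behave truthfully: a seller $u$ offered price $q$ accepts iff $c(u)\le q$. Mechanism BFM-SWM (inputs $B$, $\alpha>1$, $\beta>1$, $\epsilon>0$, $\ell\in\{1,2\}$): 1. Offer every seller the price $B$; let $R$ be the set of sellers who accept, and set $p(u)=B$ for $u\in R$. 2. Set $t=0$, $\rho_0=\epsilon/\alpha$, $u^*=\emptyset$ ($u^*$ is a set of at most one seller), and $S_{i,0}=\emptyset$ for $i\in[\ell]$. 3. Repeat rounds: set $t\leftarrow t+1$, $\rho_t=\alpha\rho_{t-1}$, $S_{i,t}=\emptyset$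 for all $i\in[\ell]$. Process the sellers $u\in R\setminus(\bigcup_{i=1}^{\ell}S_{i,t-1}\cup u^* )$ one at a time in a fixed order. For each such $u$: pick $j\in\arg\max_{i\in[\ell]}v(u\mid S_{i,t})$ (current contents); update $p(u)\leftarrow\min\{p(u),\ v(u\mid S_{j,t})/(\beta+\rho_t/B)\}$ and offer $p(u)$ to $u$. If $u$ accepts: if $v(S_{j,t}\cup\{u\})-p(S_{j,t}\cup\{u\})>\rho_t$ (current prices, $p(X)=\sum_{w\in X}p(w)$), set $u^*\leftarrow\{u\}$ and end the round immediately; otherwise add $u$ to $S_{j,t}$. If $u$ rejects, remove $u$ from $R$. After the round, stop if $R\setminus\left(\bigcup_{i=1}^{\ell}(S_{i,t-1}\cup S_{i,t})\cup u^*\right)=\emptyset$; otherwise start another round. 4. Let $M$ be the final value of $t$. Output $S^*\in\arg\max_{A\in\{S_{i,t}: i\in[\ell],\ t\in\{M-1,M\}\}\cup\{u^*\}}\big(v(A)-p(A)\big)$, paying each $u\in S^*$ its current price $p(u)$. Notation: $S_{i,t}$ denotes the contents of that candidate set at the end of round $t$, and $u^*$ its value at termination. For $A=S_{i,t}$, $p(A)=\sum_{u\in A}p(u)$ where $p(u)$ is the price $u$ accepted when it was added to $S_{i,t}$; for $A=u^*$, $p(u^* )$ is the price its member accepted when $u^*$ was last set. *)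

theory Defs
  imports Complex_Main
begin

text \<open>Candidate sets are stored as lists of pairs (seller, price accepted when the seller was
  added), in insertion order; u* is stored as an optional pair (seller, accepted price).\<close>

record 'a bfm_state =
  Rs  :: "'a set"
  pr  :: "'a \<Rightarrow> real"
  Sc  :: "nat \<Rightarrow> ('a \<times> real) list"     \<comment> \<open>S_{i,t}, current round\<close>
  Sp  :: "nat \<Rightarrow> ('a \<times> real) list"     \<comment> \<open>S_{i,t-1}, previous round\<close>
  us  :: "('a \<times> real) option"
  brk :: bool

definition elems :: "('a \<times> real) list \<Rightarrow> 'a set" where
  "elems L = fst ` set L"

definition ustar_list :: "('a \<times> real) option \<Rightarrow> ('a \<times> real) list" where
  "ustar_list x = (case x of None \<Rightarrow> [] | Some q \<Rightarrow> [q])"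

definition rho :: "real \<Rightarrow> real \<Rightarrow> nat \<Rightarrow> real" where
  "rho eps alpha t = (eps / alpha) * alpha ^ t"

text \<open>Processing one seller u in round t (with rho = rho_t).
  The tie-breaking rule tb picks an index j in the argmax (assumed in the theorem).\<close>
definition process_seller ::
  "('a set \<Rightarrow> real) \<Rightarrow> ('a \<Rightarrow> real) \<Rightarrow> real \<Rightarrow> real \<Rightarrow> real
   \<Rightarrow> (nat \<Rightarrow> 'a bfm_state \<Rightarrow> 'a \<Rightarrow> nat) \<Rightarrow> nat \<Rightarrow> 'a \<Rightarrow> 'a bfm_state \<Rightarrow> 'a bfm_state" where
  "process_seller v c B beta r tb t u s =
     (if brk s then s else
      (let j = tb t s u;
           S = elems (Sc s j);
           newp = min (pr s u) ((v (insert u S) - v S) / (beta + r / B));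
           p' = (pr s)(u := newp)
       in if c u \<le> newp then
            (if v (insert u S) - sum p' (insert u S) > r
             then s\<lparr>pr := p', us := Some (u, newp), brk := True\<rparr>
             else s\<lparr>pr := p', Sc := (Sc s)(j := Sc s j @ [(u, newp)])\<rparr>)
          else s\<lparr>pr := p', Rs := Rs s - {u}\<rparr>))"

definition bfm_round ::
  "('a set \<Rightarrow> real) \<Rightarrow> ('a \<Rightarrow> real) \<Rightarrow> real \<Rightarrow> real \<Rightarrow> real \<Rightarrow> real \<Rightarrow> nat \<Rightarrow> 'a list
   \<Rightarrow> (nat \<Rightarrow> 'a bfm_state \<Rightarrow> 'a \<Rightarrow> nat) \<Rightarrow> nat \<Rightarrow> 'a bfm_state \<Rightarrow> 'a bfm_state" where
  "bfm_round v c B alpha beta eps ell ord tb t s =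
     (let todo = filter (\<lambda>u. u \<in> Rs s - (\<Union>i\<in>{1..ell}. elems (Sc s i))
                                      - elems (ustar_list (us s))) ord;
          s0 = s\<lparr>Sp := Sc s, Sc := (\<lambda>_. []), brk := False\<rparr>
      in fold (process_seller v c B beta (rho eps alpha t) tb t) todo s0)"

definition bfm_init :: "('a \<Rightarrow> real) \<Rightarrow> real \<Rightarrow> 'a list \<Rightarrow> 'a bfm_state" where
  "bfm_init c B ord =
     \<lparr>Rs = {u \<in> set ord. c u \<le> B}, pr = (\<lambda>_. B), Sc = (\<lambda>_. []), Sp = (\<lambda>_. []),
      us = None, brk = False\<rparr>"

fun bfm_run ::
  "('a set \<Rightarrow> real) \<Rightarrow> ('a \<Rightarrow> real) \<Rightarrow> real \<Rightarrow> real \<Rightarrow> real \<Rightarrow> real \<Rightarrow> nat \<Rightarrow> 'a list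
   \<Rightarrow> (nat \<Rightarrow> 'a bfm_state \<Rightarrow> 'a \<Rightarrow> nat) \<Rightarrow> nat \<Rightarrow> 'a bfm_state" where
  "bfm_run v c B alpha beta eps ell ord tb 0 = bfm_init c B ord"
| "bfm_run v c B alpha beta eps ell ord tb (Suc t) =
     bfm_round v c B alpha beta eps ell ord tb (Suc t) (bfm_run v c B alpha beta eps ell ord tb t)"

definition bfm_stops :: "nat \<Rightarrow> 'a bfm_state \<Rightarrow> bool" where
  "bfm_stops ell s \<longleftrightarrow>
     Rs s - ((\<Union>i\<in>{1..ell}. elems (Sp s i) \<union> elems (Sc s i)) \<union> elems (ustar_list (us s))) = {}"

definition submodular_on :: "'a set \<Rightarrow> ('a set \<Rightarrow> real) \<Rightarrow> bool" where
  "submodular_on N v \<longleftrightarrow>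
     (\<forall>X Y u. X \<subseteq> Y \<longrightarrow> Y \<subseteq> N \<longrightarrow> u \<in> N \<longrightarrow> u \<notin> Y \<longrightarrow>
        v (insert u Y) - v Y \<le> v (insert u X) - v X)"

end

theory Submission
  imports Defs
begin

text \<open>Every candidate set built by the mechanism, and u*, is priced so that
  \<open>\<beta> \<cdot> p(A) \<le> v(A)\<close>: a seller is only accepted at a price at most its marginal value
  divided by \<open>\<beta> + \<rho>\<^sub>t/B \<ge> \<beta>\<close>, and these marginals add up to \<open>v(A)\<close> along the order of
  insertion (for u*, submodularity bounds the marginal by \<open>v({u})\<close>). Truthfulness gives
  \<open>c(A) \<le> p(A)\<close>.
  The invariant holds after every round whatever the tie-breaking rule.\<close>

definition well_priced ::
  "'a set \<Rightarrow> ('a set \<Rightarrow> real) \<Rightarrow> ('a \<Rightarrow> real) \<Rightarrow> real \<Rightarrow> ('a \<times> real) list \<Rightarrow> bool" where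
  "well_priced N v c beta L \<longleftrightarrow>
     (\<forall>(u, p) \<in> set L. u \<in> N \<and> c u \<le> p) \<and> beta * sum_list (map snd L) \<le> v (elems L)"

definition bfm_invariant ::
  "'a set \<Rightarrow> ('a set \<Rightarrow> real) \<Rightarrow> ('a \<Rightarrow> real) \<Rightarrow> real \<Rightarrow> 'a bfm_state \<Rightarrow> bool" where
  "bfm_invariant N v c beta s \<longleftrightarrow>
     (\<forall>j. well_priced N v c beta (Sc s j)) \<and> well_priced N v c beta (ustar_list (us s))"

lemma elems_Nil [simp]: "elems [] = {}"
  by (simp add: elems_def)

lemma elems_snoc [simp]: "elems (L @ [(u, p)]) = insert u (elems L)"
  by (auto simp: elems_def)

lemma elems_subset: "well_priced N v c beta L \<Longrightarrow> elems L \<subseteq> N"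
  by (auto simp: well_priced_def elems_def)

lemma well_priced_Nil: "v {} = 0 \<Longrightarrow> well_priced N v c beta []"
  by (simp add: well_priced_def)

lemma well_priced_snoc:
  assumes "well_priced N v c beta L" "u \<in> N" "c u \<le> p"
    and "beta * p \<le> v (insert u (elems L)) - v (elems L)"
  shows "well_priced N v c beta (L @ [(u, p)])"
  using assms by (auto simp: well_priced_def algebra_simps)

lemma well_priced_singleton:
  assumes "v {} = 0" "u \<in> N" "c u \<le> p" "beta * p \<le> v {u}"
  shows "well_priced N v c beta [(u, p)]"
proof -
  have "well_priced N v c beta ([] @ [(u, p)])"
    by (rule well_priced_snoc[OF well_priced_Nil]) (use assms in simp_all)
  then show ?thesis by simp
qed

lemma marginal_le_singleton:
  assumes "submodular_on N v" "v {} = 0" "\<forall>X. X \<subseteq> N \<longrightarrow> v X \<ge> 0" "S \<subseteq> N" "u \<in> N"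
  shows "v (insert u S) - v S \<le> v {u}"
proof (cases "u \<in> S")
  case True
  then show ?thesis using assms(3,5) by (simp add: insert_absorb)
next
  case False
  then have "v (insert u S) - v S \<le> v (insert u {}) - v {}"
    using assms(1,4,5) unfolding submodular_on_def by blast
  then show ?thesis using assms(2) by simp
qed

lemma scaled_offer_le:
  fixes a m beta d :: real
  assumes "0 \<le> min a (m / (beta + d))" "0 < beta" "0 \<le> d"
  shows "beta * min a (m / (beta + d)) \<le> m"
proof -
  have "0 \<le> m" using assms by (simp add: zero_le_divide_iff)
  then have "m / (beta + d) \<le> m / beta" using assms(2,3) by (simp add: divide_left_mono)
  then have "min a (m / (beta + d)) \<le> m / beta" by linarith
  then show ?thesis using assms(2) by (simp add: field_simps)
qed

lemma sum_costs_le_prices: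
  assumes "\<forall>(u, p) \<in> set L. u \<in> N \<and> c u \<le> p" "\<forall>u\<in>N. c u \<ge> 0"
  shows "sum c (elems L) \<le> sum_list (map snd L)"
  using assms(1)
proof (induction L)
  case Nil
  then show ?case by simp
next
  case (Cons x L)
  obtain u p where x: "x = (u, p)" by fastforce
  have L: "\<forall>(u, p) \<in> set L. u \<in> N \<and> c u \<le> p" and u: "u \<in> N" "c u \<le> p"
    using Cons.prems by (auto simp: x)
  have "sum c (elems (x # L)) \<le> c u + sum c (elems L)"
    using assms(2) u by (simp add: x elems_def sum.insert_if)
  also have "\<dots> \<le> p + sum_list (map snd L)" using Cons.IH[OF L] u(2) by simp
  finally show ?case by (simp add: x)
qed

lemma surplus_bounds:
  fixes V P C beta :: real
  assumes "beta > 1" "beta * P \<le> V" "C \<le> P"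
  shows "V \<le> (V - P) / (1 - 1 / beta) \<and> (V - P) / (1 - 1 / beta) \<le> (V - C) / (1 - 1 / beta)"
proof
  have pos: "1 - 1 / beta > 0" using assms(1) by simp
  have "V * (1 - 1 / beta) \<le> V - P" using assms(1,2) by (simp add: field_simps)
  then show "V \<le> (V - P) / (1 - 1 / beta)" using pos by (simp add: le_divide_eq)
  show "(V - P) / (1 - 1 / beta) \<le> (V - C) / (1 - 1 / beta)"
    using assms(3) pos by (simp add: divide_right_mono)
qed

lemma process_seller_invariant:
  assumes inv: "bfm_invariant N v c beta s" and u: "u \<in> N"
    and r: "r \<ge> 0" and B: "B > 0" and beta: "beta > 1" and c_nonneg: "\<forall>u\<in>N. c u \<ge> 0"
    and v_sub: "submodular_on N v" and v_nonneg: "\<forall>X. X \<subseteq> N \<longrightarrow> v X \<ge> 0" and v_empty: "v {} = 0"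
  shows "bfm_invariant N v c beta (process_seller v c B beta r tb t u s)"
proof -
  define j where "j = tb t s u"
  define S where "S = elems (Sc s j)"
  define m where "m = v (insert u S) - v S"
  define newp where "newp = min (pr s u) (m / (beta + r / B))"
  note defs = j_def[symmetric] S_def[symmetric] m_def[symmetric] newp_def[symmetric]
  have Sj: "well_priced N v c beta (Sc s j)" using inv by (simp add: bfm_invariant_def)
  have price_le_marginal: "beta * newp \<le> m" if "c u \<le> newp"
  proof -
    have "0 \<le> newp" using that c_nonneg u by force
    then show ?thesis using scaled_offer_le[of "pr s u" m beta "r / B"] beta r B
      by (simp add: newp_def)
  qed
  have marginal_le: "m \<le> v {u}"
    using marginal_le_singleton[OF v_sub v_empty v_nonneg elems_subset[OF Sj] u]
    by (simp add: m_def S_def)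
  consider "brk s" | "\<not> brk s" "c u > newp"
    | "\<not> brk s" "c u \<le> newp" "v (insert u S) - sum ((pr s)(u := newp)) (insert u S) > r"
    | "\<not> brk s" "c u \<le> newp" "\<not> v (insert u S) - sum ((pr s)(u := newp)) (insert u S) > r"
    by linarith
  then show ?thesis
  proof cases
    case 1
    then show ?thesis using inv by (simp add: process_seller_def)
  next
    case 2
    then show ?thesis using inv
      unfolding process_seller_def Let_def defs by (simp add: bfm_invariant_def)
  next
    case 3
    have "well_priced N v c beta [(u, newp)]"
      using well_priced_singleton[of v u N c newp beta] v_empty u 3 price_le_marginal marginal_le
      by simp
    then show ?thesis using 3 inv
      unfolding process_seller_def Let_def defs by (simp add: bfm_invariant_def ustar_list_def)
  next
    case 4
    have "well_priced N v c beta (Sc s j @ [(u, newp)])"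
      using well_priced_snoc[OF Sj u] 4 price_le_marginal by (simp add: m_def S_def)
    then show ?thesis using 4 inv
      unfolding process_seller_def Let_def defs by (simp add: bfm_invariant_def)
  qed
qed

lemma bfm_run_invariant:
  assumes "set ord = N" "B > 0" "alpha > 1" "eps > 0" "beta > 1" "\<forall>u\<in>N. c u \<ge> 0"
    "submodular_on N v" "\<forall>X. X \<subseteq> N \<longrightarrow> v X \<ge> 0" "v {} = 0"
  shows "bfm_invariant N v c beta (bfm_run v c B alpha beta eps ell ord tb t)"
proof (induction t)
  case 0
  show ?case
    using assms(9) by (simp add: bfm_init_def bfm_invariant_def ustar_list_def well_priced_Nil)
next
  case (Suc t)
  let ?s = "bfm_run v c B alpha beta eps ell ord tb t"
  have start: "bfm_invariant N v c beta (?s\<lparr>Sp := Sc ?s, Sc := (\<lambda>_. []), brk := False\<rparr>)"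
    using Suc assms(9) by (simp add: bfm_invariant_def well_priced_Nil)
  have rho: "rho eps alpha (Suc t) \<ge> 0" using assms(3,4) by (simp add: rho_def)
  show ?case
    unfolding bfm_run.simps bfm_round_def Let_def
    by (rule fold_invariant[where Q = "\<lambda>u. u \<in> N" and P = "bfm_invariant N v c beta", OF _ start])
      (use assms rho process_seller_invariant in auto)
qed

theorem lemma4p6:
  fixes N :: "'a set" and ord :: "'a list" and v :: "'a set \<Rightarrow> real" and c :: "'a \<Rightarrow> real"
    and B alpha beta eps :: real and ell M :: nat
    and tb :: "nat \<Rightarrow> 'a bfm_state \<Rightarrow> 'a \<Rightarrow> nat"
  assumes ord: "distinct ord" "set ord = N"
    and v_empty: "v {} = 0"
    and v_nonneg: "\<forall>X. X \<subseteq> N \<longrightarrow> v X \<ge> 0"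
    and v_sub: "submodular_on N v"
    and c_nonneg: "\<forall>u\<in>N. c u \<ge> 0"
    and params: "B > 0" "alpha > 1" "beta > 1" "eps > 0" "ell \<in> {1, 2}"
    and tb: "\<forall>t s u. tb t s u \<in> {1..ell} \<and>
               (\<forall>i\<in>{1..ell}. v (insert u (elems (Sc s i))) - v (elems (Sc s i))
                   \<le> v (insert u (elems (Sc s (tb t s u)))) - v (elems (Sc s (tb t s u))))"
    and M: "M \<ge> 1"
      "bfm_stops ell (bfm_run v c B alpha beta eps ell ord tb M)"
      "\<forall>t. 1 \<le> t \<and> t < M \<longrightarrow> \<not> bfm_stops ell (bfm_run v c B alpha beta eps ell ord tb t)"
  shows "\<forall>A \<in> {Sc (bfm_run v c B alpha beta eps ell ord tb t) i | i t. i \<in> {1..ell} \<and> t \<in> {1..M}}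
              \<union> {ustar_list (us (bfm_run v c B alpha beta eps ell ord tb M))}.
           v (elems A) \<le> (v (elems A) - sum_list (map snd A)) / (1 - 1 / beta)
         \<and> (v (elems A) - sum_list (map snd A)) / (1 - 1 / beta)
             \<le> (v (elems A) - sum c (elems A)) / (1 - 1 / beta)"
proof
  fix A
  assume "A \<in> {Sc (bfm_run v c B alpha beta eps ell ord tb t) i | i t. i \<in> {1..ell} \<and> t \<in> {1..M}}
              \<union> {ustar_list (us (bfm_run v c B alpha beta eps ell ord tb M))}"
  moreover have "\<And>t. bfm_invariant N v c beta (bfm_run v c B alpha beta eps ell ord tb t)"
    using bfm_run_invariant[OF ord(2) params(1,2,4,3) c_nonneg v_sub v_nonneg v_empty] .
  ultimately have A: "well_priced N v c beta A" unfolding bfm_invariant_def by blast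
  show "v (elems A) \<le> (v (elems A) - sum_list (map snd A)) / (1 - 1 / beta)
         \<and> (v (elems A) - sum_list (map snd A)) / (1 - 1 / beta)
             \<le> (v (elems A) - sum c (elems A)) / (1 - 1 / beta)"
    using surplus_bounds[OF params(3), of "sum_list (map snd A)" "v (elems A)" "sum c (elems A)"]
      sum_costs_le_prices[OF _ c_nonneg] A
    by (simp add: well_priced_def)
qed

end
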